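(* Let $m_1,m_2\ge3$ be coprime integers, let $n\ge1$ be divisible by $m_1$, and let $Q\in C(n,m_1,m_2)$. 1) If $Ch_1(Q)\ne0$, then $Ch_2(Q)=0$. 2) If $Ch_1(Q)\ne0$ and $Ch_3(Q)\ne0$, then $m_1=3$ and $Ch_4(Q)=0$. 3) If $Ch_1(Q)\ne0$, $Ch_3(Q)\ne0$ and $Ch_5(Q)\ne0$, then $m_1=3$ and $m_2=4$.
   Context: $T_k$ denotes the Chebyshev polynomial of the first kind of degree $k$, $T_k(\cos\phi)=\cos(k\phi)$. Every real polynomial $Q$ of degree $n$ can be uniquely written as $Q=\sum_{k=0}^n d_kT_k$ with $d_k\in\mathbb{R}$; set $Ch_i(Q)=d_{n-i}$ for $0\le i\le n$. $C(n,m_1,m_2)$ denotes the set of real polynomials $Q=\sum_{k=0}^n d_kT_k$ with $d_n\ne0$ and such that $d_k=0$ unless $k$ is divisible by $m_1$ or by $m_2$. *)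

theory Defs
  imports "HOL-Computational_Algebra.Polynomial" Complex_Main
begin

fun cheb :: "nat \<Rightarrow> real poly" where
  "cheb 0 = 1"
| "cheb (Suc 0) = [:0, 1:]"
| "cheb (Suc (Suc n)) = [:0, 2:] * cheb (Suc n) - cheb n"

definition cheb_coeffs :: "real poly \<Rightarrow> nat \<Rightarrow> real" where
  "cheb_coeffs Q = (THE d. (\<forall>k>degree Q. d k = 0) \<and>
       Q = (\<Sum>k\<le>degree Q. smult (d k) (cheb k)))"

text \<open>Ch_i(Q) = d_{n-i} for 0 <= i <= n = deg Q; set to 0 for i > n (i.e. d_{n-i} with
  d_j = 0 for negative j).\<close>
definition Ch :: "nat \<Rightarrow> real poly \<Rightarrow> real" where
  "Ch i Q = (if i \<le> degree Q then cheb_coeffs Q (degree Q - i) else 0)"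

definition C_set :: "nat \<Rightarrow> nat \<Rightarrow> nat \<Rightarrow> real poly set" where
  "C_set n m1 m2 = {Q. degree Q = n \<and> cheb_coeffs Q n \<noteq> 0 \<and>
       (\<forall>k\<le>n. cheb_coeffs Q k \<noteq> 0 \<longrightarrow> m1 dvd k \<or> m2 dvd k)}"

end

theory Submission
  imports Defs
begin

(* For Q in C(n,m1,m2) with deg Q = n, a nonzero Ch_i(Q) = d_{n-i} forces
   m1 | n-i or m2 | n-i; since m1 | n, this reads  m1 | i  or  m2 | n-i.
   As m1 >= 3 does not divide 1, Ch_1(Q) <> 0 gives m2 | n-1, and subtracting,
   every further nonzero Ch_i(Q) (i >= 1) satisfies  m1 | i  or  m2 | i-1.
   The three claims are then small case distinctions on i = 2,3,4,5:
   i = 2 is excluded since m1, m2 >= 3; i = 3 forces m1 = 3; then i = 4 would force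
   m2 = 3, contradicting coprimality; and i = 5 forces m2 | 4, i.e. m2 = 4.
   The file first proves the index condition for a single nonzero coefficient,
   then its refinement relative to Ch_1, and derives the theorem from it. *)

lemma Ch_nonzero_index:
  assumes Q: "Q \<in> C_set n m1 m2" and "m1 dvd n" and nz: "Ch i Q \<noteq> 0"
  shows "i \<le> n \<and> (m1 dvd i \<or> m2 dvd n - i)"
proof -
  have deg: "degree Q = n" using Q by (simp add: C_set_def)
  have "i \<le> n" and coeff: "cheb_coeffs Q (n - i) \<noteq> 0"
    using nz deg by (simp_all add: Ch_def split: if_splits)
  then have "m1 dvd n - i \<or> m2 dvd n - i" using Q by (auto simp: C_set_def)
  moreover have "m1 dvd n - i \<longleftrightarrow> m1 dvd i"
    using \<open>m1 dvd n\<close> \<open>i \<le> n\<close> by (metis dvd_diff_nat diff_diff_cancel)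
  ultimately show ?thesis using \<open>i \<le> n\<close> by blast
qed

lemma Ch_nonzero_index_after_first:
  assumes Q: "Q \<in> C_set n m1 m2" and "m1 dvd n" and "m1 \<noteq> 1"
    and first: "Ch 1 Q \<noteq> 0" and nz: "Ch i Q \<noteq> 0" and "i \<ge> 1"
  shows "m1 dvd i \<or> m2 dvd i - 1"
proof -
  have "m2 dvd n - 1" using Ch_nonzero_index[OF Q \<open>m1 dvd n\<close> first] \<open>m1 \<noteq> 1\<close> by auto
  moreover have "i \<le> n" and "m1 dvd i \<or> m2 dvd n - i"
    using Ch_nonzero_index[OF Q \<open>m1 dvd n\<close> nz] by auto
  moreover have "(n - 1) - (n - i) = i - 1" using \<open>i \<le> n\<close> \<open>i \<ge> 1\<close> by simp
  ultimately show ?thesis by (metis dvd_diff_nat)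
qed

theorem lemma3p3:
  fixes m1 m2 n :: nat and Q :: "real poly"
  assumes "m1 \<ge> 3" and "m2 \<ge> 3" and "coprime m1 m2"
    and "n \<ge> 1" and "m1 dvd n"
    and "Q \<in> C_set n m1 m2"
  shows "(Ch 1 Q \<noteq> 0 \<longrightarrow> Ch 2 Q = 0)
       \<and> (Ch 1 Q \<noteq> 0 \<and> Ch 3 Q \<noteq> 0 \<longrightarrow> m1 = 3 \<and> Ch 4 Q = 0)
       \<and> (Ch 1 Q \<noteq> 0 \<and> Ch 3 Q \<noteq> 0 \<and> Ch 5 Q \<noteq> 0 \<longrightarrow> m1 = 3 \<and> m2 = 4)"
proof -
  have index: "m1 dvd i \<or> m2 dvd i - 1"
    if "Ch 1 Q \<noteq> 0" "Ch i Q \<noteq> 0" "i \<ge> 1" for i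
    using Ch_nonzero_index_after_first[OF assms(6,5) _ that] assms(1) by simp
  have small: "\<not> m dvd k" if "m \<ge> 3" "0 < k" "k < 3" for m k :: nat
    using that by (auto dest: dvd_imp_le)
  have claim1: "Ch 2 Q = 0" if "Ch 1 Q \<noteq> 0"
    using index[OF that, of 2] small[OF assms(1), of 2] small[OF assms(2), of 1] by auto
  have m1_eq_3: "m1 = 3" if "Ch 1 Q \<noteq> 0" "Ch 3 Q \<noteq> 0"
    using index[OF that] small[OF assms(2), of 2] assms(1) by (auto dest: dvd_imp_le)
  have claim2: "Ch 4 Q = 0" if "Ch 1 Q \<noteq> 0" "Ch 3 Q \<noteq> 0"
  proof (rule ccontr)
    assume "Ch 4 Q \<noteq> 0"
    then have "m2 dvd 3" using index[OF that(1)] m1_eq_3[OF that] by fastforce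
    then have "m2 = 3" using assms(2) by (auto dest: dvd_imp_le)
    then show False using assms(3) m1_eq_3[OF that] by simp
  qed
  have m2_eq_4: "m2 = 4" if "Ch 1 Q \<noteq> 0" "Ch 3 Q \<noteq> 0" "Ch 5 Q \<noteq> 0"
  proof -
    have "m2 dvd 4" using index[OF that(1,3)] m1_eq_3[OF that(1,2)] by simp
    then have "m2 \<le> 4" "m2 \<noteq> 3" by (auto dest: dvd_imp_le)
    then show ?thesis using assms(2) by simp
  qed
  show ?thesis using claim1 claim2 m1_eq_3 m2_eq_4 by blast
qed

end
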